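(* Let $G=(V,E)$ be a graph with maximum (undirected) degree $\Delta$ and arboricity $\alpha$, let $\mu$ be an orientation of its edges with out-degree at most $2\alpha$, let $h\le\log\alpha$, and consider Procedure Oriented Edge-Coloring$(G,\mu,h)$. For every $0\le i\le h$, the maximum (undirected) degree $\Delta^{(i)}$ of any graph $G^{(i)}$ computed after $i$ levels of recursion satisfies $\Delta^{(i)}\le\frac{\Delta}{2^i}+2$.
   Context: Logarithms are base 2. The arboricity of $G$ is $\max_{S\subseteq V,|S|\ge2}\lceil |E(G[S])|/(|S|-1)\rceil$. An oriented degree-splitting of $(H,\mu)$ with discrepancy $\kappa$ is a partition $(E_1,E_2)$ of $E(H)$ such that for every vertex $v$, the numbers of incoming edges of $v$ in $E_1$ and in $E_2$ differ by at most $\kappa$, and likewise for outgoing edges. Procedure Oriented Edge-Coloring$(H,\mu,h)$: if $h=0$, return a proper $(\Delta(H)+1)$-edge-coloring of $H$ from a base-case subroutine; otherwise compute an oriented degree-splitting $(E_1,E_2)$ of $(H,\mu)$ with discrepancy at most 1, recursively call Oriented Edge-Coloring$(H_1,\mu,h-1)$ and Oriented Edge-Coloring$(H_2,\mu,h-1)$ on $H_1=(V,E_1)$, $H_2=(V,E_2)$ (with the orientation induced by $\mu$), and merge the colorings using disjoint palettes. $G^{(0)}=G$, and a graph computed after $i$ levels of recursion is any $H_1$ or $H_2$ produced from a graph computed after $i-1$ levels. *)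

theory Defs
  imports Complex_Main
begin

definition graph :: "'a set \<Rightarrow> 'a set set \<Rightarrow> bool" where
  "graph V E \<longleftrightarrow> finite V \<and> E \<subseteq> {{u, v} | u v. u \<in> V \<and> v \<in> V \<and> u \<noteq> v}"

text \<open>An orientation mu assigns to each edge its tail (the endpoint it leaves).\<close>
definition is_orientation :: "'a set set \<Rightarrow> ('a set \<Rightarrow> 'a) \<Rightarrow> bool" where
  "is_orientation E mu \<longleftrightarrow> (\<forall>e\<in>E. mu e \<in> e)"

definition degree :: "'a set set \<Rightarrow> 'a \<Rightarrow> nat" where
  "degree E v = card {e \<in> E. v \<in> e}"

definition outdeg :: "'a set set \<Rightarrow> ('a set \<Rightarrow> 'a) \<Rightarrow> 'a \<Rightarrow> nat" where
  "outdeg E mu v = card {e \<in> E. v \<in> e \<and> mu e = v}"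

definition indeg :: "'a set set \<Rightarrow> ('a set \<Rightarrow> 'a) \<Rightarrow> 'a \<Rightarrow> nat" where
  "indeg E mu v = card {e \<in> E. v \<in> e \<and> mu e \<noteq> v}"

definition max_degree :: "'a set \<Rightarrow> 'a set set \<Rightarrow> nat" where
  "max_degree V E = Max (insert 0 (degree E ` V))"

definition induced_edges :: "'a set set \<Rightarrow> 'a set \<Rightarrow> 'a set set" where
  "induced_edges E S = {e \<in> E. e \<subseteq> S}"

definition arboricity :: "'a set \<Rightarrow> 'a set set \<Rightarrow> nat" where
  "arboricity V E = Max (insert 0
     {nat \<lceil>real (card (induced_edges E S)) / (real (card S) - 1)\<rceil> | S. S \<subseteq> V \<and> card S \<ge> 2})"

definition oriented_degree_splitting ::
  "'a set \<Rightarrow> 'a set set \<Rightarrow> ('a set \<Rightarrow> 'a) \<Rightarrow> int \<Rightarrow> 'a set set \<Rightarrow> 'a set set \<Rightarrow> bool" where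
  "oriented_degree_splitting V H mu kappa E1 E2 \<longleftrightarrow>
     E1 \<union> E2 = H \<and> E1 \<inter> E2 = {} \<and>
     (\<forall>v\<in>V. \<bar>int (indeg E1 mu v) - int (indeg E2 mu v)\<bar> \<le> kappa \<and>
             \<bar>int (outdeg E1 mu v) - int (outdeg E2 mu v)\<bar> \<le> kappa)"

text \<open>Edge sets of the graphs computed after i levels of recursion of
  Oriented Edge-Coloring(G,mu,h), for any choice of splittings with discrepancy at most 1.\<close>
inductive computed_after :: "'a set \<Rightarrow> 'a set set \<Rightarrow> ('a set \<Rightarrow> 'a) \<Rightarrow> nat \<Rightarrow> 'a set set \<Rightarrow> bool"
  for V E mu where
  base: "computed_after V E mu 0 E"
| left: "computed_after V E mu i H \<Longrightarrow> oriented_degree_splitting V H mu 1 E1 E2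
          \<Longrightarrow> computed_after V E mu (Suc i) E1"
| right: "computed_after V E mu i H \<Longrightarrow> oriented_degree_splitting V H mu 1 E1 E2
          \<Longrightarrow> computed_after V E mu (Suc i) E2"

end

theory Submission
  imports Defs
begin

text \<open>Every vertex has in-degree plus out-degree equal to its degree, and both are additive
  over a partition of the edges. A splitting with discrepancy \<open>\<kappa>\<close> therefore leaves each
  part with at most half the degree plus \<open>\<kappa>\<close>. Iterating with \<open>\<kappa> = 1\<close>, after \<open>i\<close> levels the
  degree is at most \<open>\<Delta>/2^i + 2 (1 - 1/2^i) \<le> \<Delta>/2^i + 2\<close>.\<close>

lemma graph_finite_edges: "graph V E \<Longrightarrow> finite E"
  unfolding graph_def by (auto intro: finite_subset[of E "Pow V"])

lemma computed_after_subset: "computed_after V E mu i H \<Longrightarrow> H \<subseteq> E"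
  by (induction rule: computed_after.induct) (auto simp: oriented_degree_splitting_def)

lemma degree_eq_indeg_plus_outdeg:
  assumes "finite H"
  shows "degree H v = indeg H mu v + outdeg H mu v"
proof -
  have "{e \<in> H. v \<in> e} = {e \<in> H. v \<in> e \<and> mu e \<noteq> v} \<union> {e \<in> H. v \<in> e \<and> mu e = v}"
    by auto
  then show ?thesis
    unfolding degree_def indeg_def outdeg_def
    using assms by (simp add: card_Un_disjoint disjoint_iff)
qed

lemma card_filter_Un_disjoint:
  assumes "finite H" "E1 \<union> E2 = H" "E1 \<inter> E2 = {}"
  shows "card {e \<in> H. P e} = card {e \<in> E1. P e} + card {e \<in> E2. P e}"
proof -
  have "{e \<in> H. P e} = {e \<in> E1. P e} \<union> {e \<in> E2. P e}"
    using assms(2) by auto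
  moreover have "card ({e \<in> E1. P e} \<union> {e \<in> E2. P e}) = card {e \<in> E1. P e} + card {e \<in> E2. P e}"
    by (rule card_Un_disjoint) (use assms in auto)
  ultimately show ?thesis
    by simp
qed

lemma oriented_degree_splitting_sym:
  "oriented_degree_splitting V H mu \<kappa> E1 E2 \<Longrightarrow> oriented_degree_splitting V H mu \<kappa> E2 E1"
  unfolding oriented_degree_splitting_def by (auto simp: abs_minus_commute)

lemma oriented_degree_splitting_degree_le:
  assumes "finite H" and split: "oriented_degree_splitting V H mu \<kappa> E1 E2" and "v \<in> V"
  shows "real (degree E1 v) \<le> real (degree H v) / 2 + real_of_int \<kappa>"
proof -
  have part: "E1 \<union> E2 = H" "E1 \<inter> E2 = {}"
    and in_bal: "\<bar>int (indeg E1 mu v) - int (indeg E2 mu v)\<bar> \<le> \<kappa>"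
    and out_bal: "\<bar>int (outdeg E1 mu v) - int (outdeg E2 mu v)\<bar> \<le> \<kappa>"
    using split \<open>v \<in> V\<close> unfolding oriented_degree_splitting_def by auto
  have fin: "finite E1" "finite E2"
    using \<open>finite H\<close> part(1) by auto
  have "indeg H mu v = indeg E1 mu v + indeg E2 mu v"
    unfolding indeg_def using \<open>finite H\<close> part by (rule card_filter_Un_disjoint)
  moreover have "outdeg H mu v = outdeg E1 mu v + outdeg E2 mu v"
    unfolding outdeg_def using \<open>finite H\<close> part by (rule card_filter_Un_disjoint)
  ultimately show ?thesis
    using degree_eq_indeg_plus_outdeg[OF \<open>finite H\<close>, of v mu]
      degree_eq_indeg_plus_outdeg[OF fin(1), of v mu]
      in_bal out_bal by linarith
qed

lemma oriented_degree_splitting_degree_le_halved_bound: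
  assumes "finite H" and split: "oriented_degree_splitting V H mu 1 E1 E2"
    and "v \<in> V" and bound: "real (degree H v) \<le> D / 2 ^ i + 2 - 2 / 2 ^ i"
  shows "real (degree E1 v) \<le> D / 2 ^ Suc i + 2 - 2 / 2 ^ Suc i"
proof -
  have "real (degree E1 v) \<le> real (degree H v) / 2 + 1"
    using oriented_degree_splitting_degree_le[OF assms(1-3)] by simp
  also have "\<dots> \<le> (D / 2 ^ i + 2 - 2 / 2 ^ i) / 2 + 1"
    using bound by simp
  also have "\<dots> = D / 2 ^ Suc i + 2 - 2 / 2 ^ Suc i"
    by (simp add: field_simps)
  finally show ?thesis .
qed

lemma computed_after_degree_le:
  assumes "computed_after V E mu i H" and "finite E"
    and degE: "\<forall>v\<in>V. real (degree E v) \<le> D"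
  shows "\<forall>v\<in>V. real (degree H v) \<le> D / 2 ^ i + 2 - 2 / 2 ^ i"
  using assms(1)
proof (induction rule: computed_after.induct)
  case base
  then show ?case using degE by simp
next
  case (left i H E1 E2)
  have "finite H"
    using computed_after_subset[OF left.hyps(1)] \<open>finite E\<close> by (rule finite_subset)
  show ?case
  proof
    fix v assume "v \<in> V"
    show "real (degree E1 v) \<le> D / 2 ^ Suc i + 2 - 2 / 2 ^ Suc i"
      using oriented_degree_splitting_degree_le_halved_bound[OF \<open>finite H\<close> left.hyps(2) \<open>v \<in> V\<close>]
        left.IH \<open>v \<in> V\<close> by blast
  qed
next
  case (right i H E1 E2)
  have "finite H"
    using computed_after_subset[OF right.hyps(1)] \<open>finite E\<close> by (rule finite_subset)
  show ?case
  proof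
    fix v assume "v \<in> V"
    show "real (degree E2 v) \<le> D / 2 ^ Suc i + 2 - 2 / 2 ^ Suc i"
      using oriented_degree_splitting_degree_le_halved_bound[OF \<open>finite H\<close>
          oriented_degree_splitting_sym[OF right.hyps(2)] \<open>v \<in> V\<close>]
        right.IH \<open>v \<in> V\<close> by blast
  qed
qed

lemma degree_le_max_degree: "finite V \<Longrightarrow> v \<in> V \<Longrightarrow> degree E v \<le> max_degree V E"
  unfolding max_degree_def by simp

lemma max_degree_le:
  assumes "finite V" "0 \<le> B" "\<forall>v\<in>V. real (degree E v) \<le> B"
  shows "real (max_degree V E) \<le> B"
proof -
  have "max_degree V E \<in> insert 0 (degree E ` V)"
    unfolding max_degree_def using \<open>finite V\<close> by (intro Max_in) auto
  then show ?thesis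
    using assms(2,3) by auto
qed

text \<open>Only the graph being finite and the splittings having discrepancy at most 1 matter:
  the bound holds at every level, regardless of the orientation and of \<open>h\<close>.\<close>

theorem corollary4p9:
  fixes V :: "'a set" and E :: "'a set set" and mu :: "'a set \<Rightarrow> 'a"
    and h i :: nat and H :: "'a set set"
  assumes "graph V E"
    and "is_orientation E mu"
    and "\<forall>v\<in>V. outdeg E mu v \<le> 2 * arboricity V E"
    and "real h \<le> log 2 (real (arboricity V E))"
    and "i \<le> h"
    and "computed_after V E mu i H"
  shows "real (max_degree V H) \<le> real (max_degree V E) / 2 ^ i + 2"
proof -
  have "finite V"
    using assms(1) unfolding graph_def by simp
  let ?\<Delta> = "real (max_degree V E)"
  have "\<forall>v\<in>V. real (degree E v) \<le> ?\<Delta>"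
    using degree_le_max_degree[OF \<open>finite V\<close>] by simp
  then have "\<forall>v\<in>V. real (degree H v) \<le> ?\<Delta> / 2 ^ i + 2 - 2 / 2 ^ i"
    using computed_after_degree_le[OF assms(6) graph_finite_edges[OF assms(1)]] by blast
  then have "\<forall>v\<in>V. real (degree H v) \<le> ?\<Delta> / 2 ^ i + 2"
    by (smt (verit) divide_nonneg_nonneg zero_le_power)
  then show ?thesis
    by (rule max_degree_le[OF \<open>finite V\<close>, rotated]) simp
qed

end
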